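(* Let $f^w:\mathbb{R}^n\to\mathbb{R}^C$ be a feed-forward neural network with weight vector $w$, computed as $\phi^w_{(0)}=x$, $f^w_{(k)}=W^w_{k-1}\phi^w_{(k-1)}+b^w_{k-1}$ for $k=1,\ldots,K$, $\phi^w_{(k)}=h(f^w_{(k)})$ for $k=1,\ldots,K-1$, and $f^w(x)=f^w_{(K)}$, where $h$ is a monotonically non-decreasing activation function applied componentwise. Let $x\in\mathbb{R}^n$ be an input point with class label $y\in\{1,\ldots,C\}$, and let $p_\epsilon$ be a probability distribution on $\mathbb{R}_{\geq 0}$. Then $$p(y\mid x,w)\;\geq\;\mathbb{E}_{\epsilon\sim p_\epsilon}\big[\sigma_y(f^{w,\epsilon}_{LB}(x))\big]=:p_{\text{IBP}}(y\mid x,w),$$ where $p(y\mid x,w)$ is the robust likelihood and $f^{w,\epsilon}_{LB}(x)$ the IBP lower-bound logit vector, as defined in the context.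
   Context: $\sigma:\mathbb{R}^C\to\mathbb{R}^C$ is the softmax, $\sigma_c(z)=e^{z_c}/\sum_{j=1}^C e^{z_j}$. For $\epsilon\geq 0$, $f^{w,\epsilon}_{\min}(x)$ denotes a logit vector satisfying $\sigma_y(f^{w,\epsilon}_{\min}(x))=\min_{x':\|x-x'\|_\infty\leq\epsilon}\sigma_y(f^w(x'))$. The robust likelihood is $p(y\mid x,w)=\mathbb{E}_{\epsilon\sim p_\epsilon}[\sigma_y(f^{w,\epsilon}_{\min}(x))]=\int_{\mathbb{R}_{\ge0}}\sigma_y(f^{w,\epsilon}_{\min}(x))p_\epsilon(\epsilon)\,d\epsilon$. Interval Bound Propagation (IBP): for $\epsilon\ge0$ set $\phi^{w,L}_{(0)}=x-\epsilon\mathbf{1}$, $\phi^{w,U}_{(0)}=x+\epsilon\mathbf{1}$, and for $k=1,\ldots,K$: $\hat\mu_k=(\phi^{w,U}_{(k-1)}+\phi^{w,L}_{(k-1)})/2$, $\hat r_k=(\phi^{w,U}_{(k-1)}-\phi^{w,L}_{(k-1)})/2$, $\mu_k=W^w_{k-1}\hat\mu_k+b^w_{k-1}$, $r_k=|W^w_{k-1}|\hat r_k$ (entrywise absolute value), $f^{w,U}_{(k)}=\mu_k+r_k$, $f^{w,L}_{(k)}=\mu_k-r_k$, and $\phi^{w,U}_{(k)}=h(f^{w,U}_{(k)})$, $\phi^{w,L}_{(k)}=h(f^{w,L}_{(k)})$. Set $f^{w,U,\epsilon}=f^{w,U}_{(K)}$, $f^{w,L,\epsilon}=f^{w,L}_{(K)}$.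 The vector $f^{w,\epsilon}_{LB}(x)\in\mathbb{R}^C$ has entries $f^{w,\epsilon}_{LB,j}(x)=f^{w,U,\epsilon}_j$ if $j\neq y$ and $f^{w,\epsilon}_{LB,j}(x)=f^{w,L,\epsilon}_j$ if $j=y$. *)

theory Defs
  imports "HOL-Probability.Probability"
begin

text \<open>Vectors are represented as functions nat => real; only the first d entries
  (d the relevant width) are meaningful. Layer widths are d 0 = n, d 1, ..., d K = C.
  Layer k (k = 0..K-1) has weight matrix W k (entry W k i j, i < d (Suc k), j < d k)
  and bias b k. Classes are indexed 0..C-1.\<close>

definition softmax :: "nat \<Rightarrow> (nat \<Rightarrow> real) \<Rightarrow> nat \<Rightarrow> real" where
  "softmax C z c = exp (z c) / (\<Sum>j<C. exp (z j))"

definition affine ::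
  "(nat \<Rightarrow> nat \<Rightarrow> nat \<Rightarrow> real) \<Rightarrow> (nat \<Rightarrow> nat \<Rightarrow> real) \<Rightarrow> (nat \<Rightarrow> nat) \<Rightarrow> nat
   \<Rightarrow> (nat \<Rightarrow> real) \<Rightarrow> (nat \<Rightarrow> real)" where
  "affine W b d k v = (\<lambda>i. (\<Sum>j<d k. W k i j * v j) + b k i)"

fun net_phi ::
  "(nat \<Rightarrow> nat \<Rightarrow> nat \<Rightarrow> real) \<Rightarrow> (nat \<Rightarrow> nat \<Rightarrow> real) \<Rightarrow> (real \<Rightarrow> real) \<Rightarrow> (nat \<Rightarrow> nat)
   \<Rightarrow> (nat \<Rightarrow> real) \<Rightarrow> nat \<Rightarrow> (nat \<Rightarrow> real)" where
  "net_phi W b h d x 0 = x"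
| "net_phi W b h d x (Suc k) = (\<lambda>i. h (affine W b d k (net_phi W b h d x k) i))"

definition net_out ::
  "(nat \<Rightarrow> nat \<Rightarrow> nat \<Rightarrow> real) \<Rightarrow> (nat \<Rightarrow> nat \<Rightarrow> real) \<Rightarrow> (real \<Rightarrow> real) \<Rightarrow> (nat \<Rightarrow> nat)
   \<Rightarrow> nat \<Rightarrow> (nat \<Rightarrow> real) \<Rightarrow> (nat \<Rightarrow> real)" where
  "net_out W b h d K x = affine W b d (K - 1) (net_phi W b h d x (K - 1))"

definition linf_ball :: "nat \<Rightarrow> (nat \<Rightarrow> real) \<Rightarrow> real \<Rightarrow> (nat \<Rightarrow> real) set" where
  "linf_ball n x \<epsilon> = {x'. \<forall>j<n. \<bar>x j - x' j\<bar> \<le> \<epsilon>}"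

text \<open>Robust likelihood: E_eps [ min over the l_inf ball of sigma_y(f^w(x')) ]
  (the minimum is written as an infimum; they agree whenever the minimum exists).\<close>
definition robust_lik ::
  "(nat \<Rightarrow> nat \<Rightarrow> nat \<Rightarrow> real) \<Rightarrow> (nat \<Rightarrow> nat \<Rightarrow> real) \<Rightarrow> (real \<Rightarrow> real) \<Rightarrow> (nat \<Rightarrow> nat)
   \<Rightarrow> nat \<Rightarrow> real measure \<Rightarrow> (nat \<Rightarrow> real) \<Rightarrow> nat \<Rightarrow> real" where
  "robust_lik W b h d K M x y =
     (\<integral>\<epsilon>. (INF x'\<in>linf_ball (d 0) x \<epsilon>. softmax (d K) (net_out W b h d K x') y) \<partial>M)"

definition ibp_step ::
  "(nat \<Rightarrow> nat \<Rightarrow> nat \<Rightarrow> real) \<Rightarrow> (nat \<Rightarrow> nat \<Rightarrow> real) \<Rightarrow> (nat \<Rightarrow> nat) \<Rightarrow> nat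
   \<Rightarrow> (nat \<Rightarrow> real) \<times> (nat \<Rightarrow> real) \<Rightarrow> (nat \<Rightarrow> real) \<times> (nat \<Rightarrow> real)" where
  "ibp_step W b d k LU =
     (let L = fst LU; U = snd LU;
          muhat = (\<lambda>j. (U j + L j) / 2);
          rhat = (\<lambda>j. (U j - L j) / 2);
          mu = affine W b d k muhat;
          r = (\<lambda>i. \<Sum>j<d k. \<bar>W k i j\<bar> * rhat j)
      in (\<lambda>i. mu i - r i, \<lambda>i. mu i + r i))"

fun ibp_phi ::
  "(nat \<Rightarrow> nat \<Rightarrow> nat \<Rightarrow> real) \<Rightarrow> (nat \<Rightarrow> nat \<Rightarrow> real) \<Rightarrow> (real \<Rightarrow> real) \<Rightarrow> (nat \<Rightarrow> nat)
   \<Rightarrow> (nat \<Rightarrow> real) \<Rightarrow> real \<Rightarrow> nat \<Rightarrow> (nat \<Rightarrow> real) \<times> (nat \<Rightarrow> real)" where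
  "ibp_phi W b h d x \<epsilon> 0 = (\<lambda>j. x j - \<epsilon>, \<lambda>j. x j + \<epsilon>)"
| "ibp_phi W b h d x \<epsilon> (Suc k) =
     (let LU = ibp_step W b d k (ibp_phi W b h d x \<epsilon> k)
      in (\<lambda>i. h (fst LU i), \<lambda>i. h (snd LU i)))"

definition ibp_out ::
  "(nat \<Rightarrow> nat \<Rightarrow> nat \<Rightarrow> real) \<Rightarrow> (nat \<Rightarrow> nat \<Rightarrow> real) \<Rightarrow> (real \<Rightarrow> real) \<Rightarrow> (nat \<Rightarrow> nat)
   \<Rightarrow> nat \<Rightarrow> (nat \<Rightarrow> real) \<Rightarrow> real \<Rightarrow> (nat \<Rightarrow> real) \<times> (nat \<Rightarrow> real)" where
  "ibp_out W b h d K x \<epsilon> = ibp_step W b d (K - 1) (ibp_phi W b h d x \<epsilon> (K - 1))"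

definition f_LB ::
  "(nat \<Rightarrow> nat \<Rightarrow> nat \<Rightarrow> real) \<Rightarrow> (nat \<Rightarrow> nat \<Rightarrow> real) \<Rightarrow> (real \<Rightarrow> real) \<Rightarrow> (nat \<Rightarrow> nat)
   \<Rightarrow> nat \<Rightarrow> (nat \<Rightarrow> real) \<Rightarrow> nat \<Rightarrow> real \<Rightarrow> (nat \<Rightarrow> real)" where
  "f_LB W b h d K x y \<epsilon> =
     (\<lambda>j. if j = y then fst (ibp_out W b h d K x \<epsilon>) j else snd (ibp_out W b h d K x \<epsilon>) j)"

definition ibp_lik ::
  "(nat \<Rightarrow> nat \<Rightarrow> nat \<Rightarrow> real) \<Rightarrow> (nat \<Rightarrow> nat \<Rightarrow> real) \<Rightarrow> (real \<Rightarrow> real) \<Rightarrow> (nat \<Rightarrow> nat)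
   \<Rightarrow> nat \<Rightarrow> real measure \<Rightarrow> (nat \<Rightarrow> real) \<Rightarrow> nat \<Rightarrow> real" where
  "ibp_lik W b h d K M x y = (\<integral>\<epsilon>. softmax (d K) (f_LB W b h d K x y \<epsilon>) y \<partial>M)"

end

theory Submission
  imports Defs
begin

text \<open>Every input x' in the l\<infinity>-ball of radius \<epsilon> around x has its activations inside the IBP
  intervals: an affine layer maps a box with midpoint m and radius r into the box with midpoint
  W m + b and radius |W| r, and the monotone activation h preserves the order of the bounds.
  The class-y softmax is increasing in the y-th logit and decreasing in all others, so
  evaluating it at the IBP lower-bound logits gives at most its value at f(x') for every x' in
  the ball, hence at most the infimum over the ball. Integrating over \<epsilon> gives the claim; the
  infimum is measurable in \<epsilon> because it is antitone for \<epsilon> \<ge> 0 and constant for \<epsilon> < 0.\<close>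

lemma abs_sub_midpoint_le_radius:
  fixes l v u :: real
  assumes "l \<le> v" "v \<le> u"
  shows "\<bar>v - (u + l) / 2\<bar> \<le> (u - l) / 2"
  using assms unfolding abs_le_iff by (simp add: field_simps)

lemma ibp_step_sound:
  assumes "\<And>j. j < d k \<Longrightarrow> fst LU j \<le> v j \<and> v j \<le> snd LU j"
  shows "fst (ibp_step W b d k LU) i \<le> affine W b d k v i \<and>
         affine W b d k v i \<le> snd (ibp_step W b d k LU) i"
proof -
  define m where "m = (\<lambda>j. (snd LU j + fst LU j) / 2)"
  define r where "r = (\<lambda>j. (snd LU j - fst LU j) / 2)"
  have "affine W b d k v i - affine W b d k m i = (\<Sum>j<d k. W k i j * (v j - m j))"
    by (simp add: affine_def sum_subtractf[symmetric] algebra_simps)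
  also have "\<bar>\<dots>\<bar> \<le> (\<Sum>j<d k. \<bar>W k i j * (v j - m j)\<bar>)"
    by (rule sum_abs)
  also have "\<dots> \<le> (\<Sum>j<d k. \<bar>W k i j\<bar> * r j)"
  proof (rule sum_mono)
    fix j assume "j \<in> {..<d k}"
    then have "fst LU j \<le> v j" "v j \<le> snd LU j"
      using assms by auto
    then have "\<bar>v j - m j\<bar> \<le> r j"
      unfolding m_def r_def by (rule abs_sub_midpoint_le_radius)
    then show "\<bar>W k i j * (v j - m j)\<bar> \<le> \<bar>W k i j\<bar> * r j"
      by (simp add: abs_mult mult_left_mono)
  qed
  finally show ?thesis
    unfolding ibp_step_def Let_def m_def r_def by auto
qed

lemma ibp_phi_sound:
  assumes "mono h" "x' \<in> linf_ball (d 0) x \<epsilon>" "j < d k"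
  shows "fst (ibp_phi W b h d x \<epsilon> k) j \<le> net_phi W b h d x' k j \<and>
         net_phi W b h d x' k j \<le> snd (ibp_phi W b h d x \<epsilon> k) j"
  using assms(3)
proof (induction k arbitrary: j)
  case 0
  then show ?case using assms(2) by (auto simp: linf_ball_def abs_le_iff)
next
  case (Suc k)
  have "fst (ibp_step W b d k (ibp_phi W b h d x \<epsilon> k)) j \<le> affine W b d k (net_phi W b h d x' k) j \<and>
        affine W b d k (net_phi W b h d x' k) j \<le> snd (ibp_step W b d k (ibp_phi W b h d x \<epsilon> k)) j"
    by (rule ibp_step_sound) (rule Suc.IH)
  then show ?case using assms(1) by (auto simp: Let_def monoD)
qed

lemma ibp_out_sound:
  assumes "mono h" "x' \<in> linf_ball (d 0) x \<epsilon>"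
  shows "fst (ibp_out W b h d K x \<epsilon>) i \<le> net_out W b h d K x' i \<and>
         net_out W b h d K x' i \<le> snd (ibp_out W b h d K x \<epsilon>) i"
  unfolding ibp_out_def net_out_def
  by (rule ibp_step_sound) (rule ibp_phi_sound[where d=d, OF assms])

lemma softmax_eq_inverse_sum_exp_diff:
  "softmax C z y = 1 / (\<Sum>j<C. exp (z j - z y))"
  by (simp add: softmax_def exp_diff sum_divide_distrib[symmetric])

lemma softmax_mono:
  assumes "y < C" "z' y \<le> z y" "\<And>j. j < C \<Longrightarrow> j \<noteq> y \<Longrightarrow> z j \<le> z' j"
  shows "softmax C z' y \<le> softmax C z y"
proof -
  have "0 < (\<Sum>j<C. exp (z j - z y))"
    using assms(1) by (intro sum_pos) auto
  moreover have "(\<Sum>j<C. exp (z j - z y)) \<le> (\<Sum>j<C. exp (z' j - z' y))"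
  proof (rule sum_mono)
    fix j assume "j \<in> {..<C}"
    then show "exp (z j - z y) \<le> exp (z' j - z' y)"
      using assms(2) assms(3)[of j] by (cases "j = y") auto
  qed
  ultimately show ?thesis
    unfolding softmax_eq_inverse_sum_exp_diff by (simp add: frac_le)
qed

lemma softmax_f_LB_le:
  assumes "mono h" "y < d K" "x' \<in> linf_ball (d 0) x \<epsilon>"
  shows "softmax (d K) (f_LB W b h d K x y \<epsilon>) y \<le> softmax (d K) (net_out W b h d K x') y"
  using ibp_out_sound[where d=d, OF assms(1,3)]
  by (intro softmax_mono[OF assms(2)]) (auto simp: f_LB_def)

lemma softmax_nonneg: "0 \<le> softmax C z y"
  by (simp add: softmax_def sum_nonneg)

lemma softmax_le_one:
  assumes "y < C"
  shows "softmax C z y \<le> 1"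
proof -
  have "exp (z y) \<le> (\<Sum>j<C. exp (z j))"
    using assms by (intro member_le_sum) auto
  moreover have "0 < (\<Sum>j<C. exp (z j))"
    using assms by (intro sum_pos) auto
  ultimately show ?thesis by (simp add: softmax_def)
qed

lemma center_in_linf_ball: "0 \<le> \<epsilon> \<Longrightarrow> x \<in> linf_ball n x \<epsilon>"
  by (simp add: linf_ball_def)

lemma linf_ball_mono: "\<epsilon> \<le> \<epsilon>' \<Longrightarrow> linf_ball n x \<epsilon> \<subseteq> linf_ball n x \<epsilon>'"
  by (auto simp: linf_ball_def)

lemma linf_ball_neg: "\<epsilon> < 0 \<Longrightarrow> linf_ball n x \<epsilon> = (if n = 0 then UNIV else {})"
  by (auto simp: linf_ball_def dest: spec[of _ 0])

lemma borel_measurable_INF_linf_ball: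
  fixes F :: "(nat \<Rightarrow> real) \<Rightarrow> real"
  assumes "bdd_below (range F)"
  shows "(\<lambda>\<epsilon>. INF x'\<in>linf_ball n x \<epsilon>. F x') \<in> borel_measurable borel"
proof -
  let ?g = "\<lambda>\<epsilon>. - (INF x'\<in>linf_ball n x \<epsilon>. F x')"
  have "mono_on {..<0} ?g"
    by (intro mono_onI) (simp add: linf_ball_neg)
  moreover have "mono_on {0..} ?g"
  proof (intro mono_onI)
    fix \<epsilon> \<epsilon>' :: real assume "\<epsilon> \<in> {0..}" "\<epsilon> \<le> \<epsilon>'"
    then show "?g \<epsilon> \<le> ?g \<epsilon>'"
      using center_in_linf_ball[of \<epsilon> x n] linf_ball_mono[of \<epsilon> \<epsilon>' n x]
      by (auto intro!: cINF_superset_mono bdd_below.mono[OF assms])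
  qed
  ultimately have "?g \<in> borel_measurable borel"
    by (intro borel_measurable_piecewise_mono[of "{{..<0}, {0..}}"]) auto
  from borel_measurable_uminus[OF this] show ?thesis
    by simp
qed

lemma INF_linf_ball_bounds:
  fixes F :: "(nat \<Rightarrow> real) \<Rightarrow> real"
  assumes "0 \<le> \<epsilon>" "\<And>x'. 0 \<le> F x'" "\<And>x'. F x' \<le> 1"
  shows "0 \<le> (INF x'\<in>linf_ball n x \<epsilon>. F x')" "(INF x'\<in>linf_ball n x \<epsilon>. F x') \<le> 1"
proof -
  have center: "x \<in> linf_ball n x \<epsilon>"
    using assms(1) by (rule center_in_linf_ball)
  then show "0 \<le> (INF x'\<in>linf_ball n x \<epsilon>. F x')"
    using assms(2) by (intro cINF_greatest) auto
  have "bdd_below (F ` linf_ball n x \<epsilon>)"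
    using assms(2) by (intro bdd_belowI2)
  then have "(INF x'\<in>linf_ball n x \<epsilon>. F x') \<le> F x"
    using center by (rule cINF_lower)
  with assms(3)[of x] show "(INF x'\<in>linf_ball n x \<epsilon>. F x') \<le> 1"
    by linarith
qed

lemma integrable_INF_linf_ball:
  fixes F :: "(nat \<Rightarrow> real) \<Rightarrow> real"
  assumes "finite_measure M" "sets M = sets borel" "AE \<epsilon> in M. 0 \<le> \<epsilon>"
    and "\<And>x'. 0 \<le> F x'" "\<And>x'. F x' \<le> 1"
  shows "integrable M (\<lambda>\<epsilon>. INF x'\<in>linf_ball n x \<epsilon>. F x')"
proof (rule finite_measure.integrable_const_bound[OF assms(1), where B=1])
  show "AE \<epsilon> in M. norm (INF x'\<in>linf_ball n x \<epsilon>. F x') \<le> 1"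
    using assms(3) by eventually_elim (simp add: INF_linf_ball_bounds assms(4,5))
  have "bdd_below (range F)"
    using assms(4) by (intro bdd_belowI2)
  then show "(\<lambda>\<epsilon>. INF x'\<in>linf_ball n x \<epsilon>. F x') \<in> borel_measurable M"
    unfolding measurable_cong_sets[OF assms(2) refl] by (rule borel_measurable_INF_linf_ball)
qed

theorem proposition1:
  fixes W :: "nat \<Rightarrow> nat \<Rightarrow> nat \<Rightarrow> real" and b :: "nat \<Rightarrow> nat \<Rightarrow> real"
    and h :: "real \<Rightarrow> real" and d :: "nat \<Rightarrow> nat" and K :: nat
    and M :: "real measure" and x :: "nat \<Rightarrow> real" and y :: nat
  assumes "mono h"
    and "1 \<le> K"
    and "y < d K"
    and "prob_space M"
    and "sets M = sets borel"
    and "AE \<epsilon> in M. 0 \<le> \<epsilon>"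
  shows "robust_lik W b h d K M x y \<ge> ibp_lik W b h d K M x y"
proof -
  interpret prob_space M by fact
  define s where "s x' = softmax (d K) (net_out W b h d K x') y" for x'
  define g where "g \<epsilon> = (INF x'\<in>linf_ball (d 0) x \<epsilon>. s x')" for \<epsilon>
  have s_bounds: "0 \<le> s x'" "s x' \<le> 1" for x'
    unfolding s_def using softmax_nonneg softmax_le_one[OF assms(3)] by auto
  have "integrable M g"
    unfolding g_def using finite_measure_axioms assms(5,6) s_bounds
    by (rule integrable_INF_linf_ball)
  moreover have "AE \<epsilon> in M. softmax (d K) (f_LB W b h d K x y \<epsilon>) y \<le> g \<epsilon>"
    using assms(6)
  proof eventually_elim
    case (elim \<epsilon>)
    then have "linf_ball (d 0) x \<epsilon> \<noteq> {}"
      using center_in_linf_ball by blast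
    then show ?case
      unfolding g_def s_def by (intro cINF_greatest softmax_f_LB_le[where d=d, OF assms(1,3)])
  qed
  moreover have "AE \<epsilon> in M. 0 \<le> g \<epsilon>"
    using assms(6) unfolding g_def by eventually_elim (rule INF_linf_ball_bounds(1)[OF _ s_bounds])
  ultimately show ?thesis
    unfolding robust_lik_def ibp_lik_def g_def[symmetric] s_def[symmetric]
    by (rule integral_mono_AE')
qed

end
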